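(* Let $\mathcal{X}\subset\mathbb{R}^d$ be compact, let $k$ be a positive definite kernel on $\mathcal{X}$ with $k(x,x)\le 1$ for all $x\in\mathcal{X}$, and let $f\in\mathcal{H}_k$. Assume the kernel matrices $\mathbf{K}_t$ of the query points are invertible and that all maximizers below exist. Let $x_1,\dots,x_T$ be generated by Algorithm 1: for $t=1,\dots,T$, $x_t\in\arg\max_{x\in\mathcal{X}}\, m_{t-1}(x)+\|f\|_{\mathcal{H}_k}\sigma_{t-1}(x)$, and $f(x_t)$ is observed. Fix any $\sigma>0$ and let $C_1=\frac{8}{\log(1+\sigma^{-2})}$. Then $$R_T\le \|f\|_{\mathcal{H}_k}\sqrt{T C_1\gamma_T},\qquad r_T\le \|f\|_{\mathcal{H}_k}\sqrt{\frac{C_1\gamma_T}{T}}.$$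
   Context: For query points $x_1,\dots,x_t$, $\mathbf{k}_t(x)=[k(x,x_1),\dots,k(x,x_t)]^T$, $\mathbf{K}_t=[k(x_i,x_j)]_{1\le i,j\le t}$, $\mathbf{f}_t=[f(x_1),\dots,f(x_t)]^T$, and (noise-free) $m_t(x)=\mathbf{k}_t(x)^T\mathbf{K}_t^{-1}\mathbf{f}_t$, $\sigma_t^2(x)=k(x,x)-\mathbf{k}_t(x)^T\mathbf{K}_t^{-1}\mathbf{k}_t(x)$, with $m_0\equiv 0$, $\sigma_0^2(x)=k(x,x)$. Let $x^*\in\arg\max_{x\in\mathcal{X}}f(x)$. Cumulative regret $R_T=\sum_{t=1}^T(f(x^* )-f(x_t))$; simple regret $r_T=f(x^* )-\max_{1\le t\le T}f(x_t)$. Maximum information gain: $\gamma_T=\max_{x_1,\dots,x_T\in\mathcal{X}}\frac12\log\det(\mathbf{I}_T+\sigma^{-2}\mathbf{K}_T)$. *)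

theory Defs
  imports "HOL-Analysis.Analysis" "Jordan_Normal_Form.Determinant"
          "Jordan_Normal_Form.Gauss_Jordan_Elimination"
begin

text \<open>An element of the pre-Hilbert space H_0 = span of k(p,.) is represented by a finite
  list of (coefficient, centre) pairs: g = sum c * k(p,.).\<close>

definition pre_eval :: "('a \<Rightarrow> 'a \<Rightarrow> real) \<Rightarrow> (real \<times> 'a) list \<Rightarrow> 'a \<Rightarrow> real" where
  "pre_eval k g y = (\<Sum>(c,p)\<leftarrow>g. c * k p y)"

definition pre_sqnorm :: "('a \<Rightarrow> 'a \<Rightarrow> real) \<Rightarrow> (real \<times> 'a) list \<Rightarrow> real" where
  "pre_sqnorm k g = (\<Sum>(c,p)\<leftarrow>g. \<Sum>(c',p')\<leftarrow>g. c * c' * k p p')"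

definition pre_diff :: "(real \<times> 'a) list \<Rightarrow> (real \<times> 'a) list \<Rightarrow> (real \<times> 'a) list" where
  "pre_diff g h = g @ map (\<lambda>(c,p). (- c, p)) h"

definition pd_kernel :: "('a \<Rightarrow> 'a \<Rightarrow> real) \<Rightarrow> 'a set \<Rightarrow> bool" where
  "pd_kernel k X \<longleftrightarrow> (\<forall>x\<in>X. \<forall>y\<in>X. k x y = k y x) \<and>
     (\<forall>g. set (map snd g) \<subseteq> X \<longrightarrow> pre_sqnorm k g \<ge> 0)"

definition rkhs_seq :: "('a \<Rightarrow> 'a \<Rightarrow> real) \<Rightarrow> 'a set \<Rightarrow> (nat \<Rightarrow> (real \<times> 'a) list) \<Rightarrow> ('a \<Rightarrow> real) \<Rightarrow> bool" where
  "rkhs_seq k X gs f \<longleftrightarrow> (\<forall>n. set (map snd (gs n)) \<subseteq> X) \<and>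
     (\<forall>e>0. \<exists>N. \<forall>m\<ge>N. \<forall>n\<ge>N. pre_sqnorm k (pre_diff (gs m) (gs n)) < e) \<and>
     (\<forall>y\<in>X. (\<lambda>n. pre_eval k (gs n) y) \<longlonglongrightarrow> f y)"

definition in_rkhs :: "('a \<Rightarrow> 'a \<Rightarrow> real) \<Rightarrow> 'a set \<Rightarrow> ('a \<Rightarrow> real) \<Rightarrow> bool" where
  "in_rkhs k X f \<longleftrightarrow> (\<exists>gs. rkhs_seq k X gs f)"

text \<open>RKHS norm: limit of the H_0 norms of any approximating sequence (well defined for pd k).\<close>
definition rkhs_norm :: "('a \<Rightarrow> 'a \<Rightarrow> real) \<Rightarrow> 'a set \<Rightarrow> ('a \<Rightarrow> real) \<Rightarrow> real" where
  "rkhs_norm k X f = (THE r. \<exists>gs. rkhs_seq k X gs f \<and>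
      (\<lambda>n. sqrt (pre_sqnorm k (gs n))) \<longlonglongrightarrow> r)"

text \<open>Kernel matrix K_t of query points x 1, ..., x t (0-based matrix indices).\<close>
definition Kmat :: "('a \<Rightarrow> 'a \<Rightarrow> real) \<Rightarrow> (nat \<Rightarrow> 'a) \<Rightarrow> nat \<Rightarrow> real mat" where
  "Kmat k xs t = mat t t (\<lambda>(i,j). k (xs (Suc i)) (xs (Suc j)))"

definition Kinv :: "('a \<Rightarrow> 'a \<Rightarrow> real) \<Rightarrow> (nat \<Rightarrow> 'a) \<Rightarrow> nat \<Rightarrow> real mat" where
  "Kinv k xs t = the (mat_inverse (Kmat k xs t))"

definition post_mean :: "('a \<Rightarrow> 'a \<Rightarrow> real) \<Rightarrow> ('a \<Rightarrow> real) \<Rightarrow> (nat \<Rightarrow> 'a) \<Rightarrow> nat \<Rightarrow> 'a \<Rightarrow> real" where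
  "post_mean k f xs t y = (\<Sum>i<t. \<Sum>j<t. k y (xs (Suc i)) * Kinv k xs t $$ (i,j) * f (xs (Suc j)))"

definition post_var :: "('a \<Rightarrow> 'a \<Rightarrow> real) \<Rightarrow> (nat \<Rightarrow> 'a) \<Rightarrow> nat \<Rightarrow> 'a \<Rightarrow> real" where
  "post_var k xs t y = k y y -
     (\<Sum>i<t. \<Sum>j<t. k y (xs (Suc i)) * Kinv k xs t $$ (i,j) * k y (xs (Suc j)))"

definition max_info_gain :: "('a \<Rightarrow> 'a \<Rightarrow> real) \<Rightarrow> 'a set \<Rightarrow> real \<Rightarrow> nat \<Rightarrow> real" where
  "max_info_gain k X \<sigma> T = (SUP xs \<in> {xs. \<forall>i\<in>{1..T}. xs i \<in> X}.
      1/2 * ln (det (1\<^sub>m T + (1 / \<sigma>\<^sup>2) \<cdot>\<^sub>m Kmat k xs T)))"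

definition cumulative_regret :: "('a \<Rightarrow> real) \<Rightarrow> 'a \<Rightarrow> (nat \<Rightarrow> 'a) \<Rightarrow> nat \<Rightarrow> real" where
  "cumulative_regret f xstar xs T = (\<Sum>t=1..T. f xstar - f (xs t))"

definition simple_regret :: "('a \<Rightarrow> real) \<Rightarrow> 'a \<Rightarrow> (nat \<Rightarrow> 'a) \<Rightarrow> nat \<Rightarrow> real" where
  "simple_regret f xstar xs T = f xstar - Max ((\<lambda>t. f (xs t)) ` {1..T})"

end

theory Submission
  imports Defs
begin

text \<open>For f in the RKHS, f(y) - m_t(y) is the inner product of f with the residual
  k(y,.) - \<Sum>j. \<beta>_j k(x_j,.), whose squared norm is the posterior variance; by Cauchy--Schwarz
  (first in the pre-Hilbert space spanned by the kernel sections, then in the limit along an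
  approximating sequence) the posterior band of half-width ||f|| sigma_t(y) contains f(y).
  As x_t maximizes the upper end of this band, the regret at step t is at most
  2 ||f|| sigma_(t-1)(x_t). Expanding det (I + K_t / sigma^2) along its last row and column
  (a Schur complement) shows that it grows at step t by a factor of at least
  1 + sigma_(t-1)(x_t)^2 / sigma^2; with concavity of ln this yields
  \<Sum>t. sigma_(t-1)(x_t)^2 \<le> 2 gamma_T / ln (1 + sigma^-2) = C1 gamma_T / 4, and Cauchy--Schwarz
  over t gives the bound on R_T, from which r_T \<le> R_T / T follows.\<close>

section \<open>The pre-Hilbert space of kernel sections\<close>

definition pre_inner :: "('a \<Rightarrow> 'a \<Rightarrow> real) \<Rightarrow> (real \<times> 'a) list \<Rightarrow> (real \<times> 'a) list \<Rightarrow> real" where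
  "pre_inner k g h = (\<Sum>(c,p)\<leftarrow>g. \<Sum>(c',p')\<leftarrow>h. c * c' * k p p')"

definition pre_norm :: "('a \<Rightarrow> 'a \<Rightarrow> real) \<Rightarrow> (real \<times> 'a) list \<Rightarrow> real" where
  "pre_norm k g = sqrt (pre_sqnorm k g)"

definition pre_neg :: "(real \<times> 'a) list \<Rightarrow> (real \<times> 'a) list" where
  "pre_neg h = map (\<lambda>(c,p). (- c, p)) h"

definition pre_scale :: "real \<Rightarrow> (real \<times> 'a) list \<Rightarrow> (real \<times> 'a) list" where
  "pre_scale t h = map (\<lambda>(c,p). (t * c, p)) h"

lemma pre_sqnorm_eq_pre_inner: "pre_sqnorm k g = pre_inner k g g"
  unfolding pre_sqnorm_def pre_inner_def by simp

lemma pre_inner_eq_sum_eval: "pre_inner k g h = (\<Sum>(c',p')\<leftarrow>h. c' * pre_eval k g p')"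
proof (induction g)
  case Nil
  then show ?case by (simp add: pre_inner_def pre_eval_def)
next
  case (Cons a g)
  obtain c p where a: "a = (c,p)" by force
  have "pre_inner k (a # g) h = (\<Sum>(c',p')\<leftarrow>h. c * c' * k p p') + pre_inner k g h"
    by (simp add: pre_inner_def a)
  also have "\<dots> = (\<Sum>(c',p')\<leftarrow>h. c' * pre_eval k (a # g) p')"
    unfolding Cons a by (induction h) (auto simp: pre_eval_def algebra_simps)
  finally show ?case .
qed

lemma pre_eval_append [simp]: "pre_eval k (g @ h) y = pre_eval k g y + pre_eval k h y"
  by (simp add: pre_eval_def)

lemma pre_eval_pre_neg [simp]: "pre_eval k (pre_neg h) y = - pre_eval k h y"
  by (induction h) (auto simp: pre_eval_def pre_neg_def)

lemma pre_diff_eq_append_pre_neg: "pre_diff g h = g @ pre_neg h"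
  by (simp add: pre_diff_def pre_neg_def)

lemma pre_eval_pre_diff [simp]: "pre_eval k (pre_diff g h) y = pre_eval k g y - pre_eval k h y"
  by (simp add: pre_diff_eq_append_pre_neg)

lemma map_snd_pre_neg [simp]: "map snd (pre_neg h) = map snd h"
  by (induction h) (auto simp: pre_neg_def)

lemma map_snd_pre_scale [simp]: "map snd (pre_scale t h) = map snd h"
  by (induction h) (auto simp: pre_scale_def)

lemma centres_pre_diff [simp]: "snd ` set (pre_diff g h) = snd ` set g \<union> snd ` set h"
  by (metis image_Un map_snd_pre_neg pre_diff_eq_append_pre_neg set_append set_map)

lemma pre_inner_append_left: "pre_inner k (g @ g') h = pre_inner k g h + pre_inner k g' h"
  by (simp add: pre_inner_def)

lemma pre_inner_append_right: "pre_inner k g (h @ h') = pre_inner k g h + pre_inner k g h'"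
  by (simp add: pre_inner_eq_sum_eval)

lemma pre_inner_pre_scale_right: "pre_inner k g (pre_scale t h) = t * pre_inner k g h"
  unfolding pre_inner_eq_sum_eval pre_scale_def by (induction h) (auto simp: algebra_simps)

lemma pre_inner_pre_neg_left: "pre_inner k (pre_neg g) h = - pre_inner k g h"
  unfolding pre_inner_eq_sum_eval by (induction h) auto

lemma pre_inner_pre_neg_right: "pre_inner k g (pre_neg h) = - pre_inner k g h"
  unfolding pre_inner_eq_sum_eval pre_neg_def by (induction h) auto

lemma pre_inner_cong_eval:
  assumes "set (map snd h) \<subseteq> X" and "\<forall>y\<in>X. pre_eval k g y = pre_eval k g' y"
  shows "pre_inner k g h = pre_inner k g' h"
  unfolding pre_inner_eq_sum_eval using assms
  by (intro arg_cong[where f=sum_list] map_cong refl) force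

lemma pre_inner_commute:
  assumes sym: "\<forall>x\<in>X. \<forall>y\<in>X. k x y = k y x"
    and g: "set (map snd g) \<subseteq> X" and h: "set (map snd h) \<subseteq> X"
  shows "pre_inner k g h = pre_inner k h g"
proof -
  have "pre_inner k h g = (\<Sum>(c,p)\<leftarrow>g. c * (\<Sum>(c',p')\<leftarrow>h. c' * k p' p))"
    by (simp add: pre_inner_eq_sum_eval pre_eval_def)
  also have "\<dots> = (\<Sum>(c,p)\<leftarrow>g. \<Sum>(c',p')\<leftarrow>h. c * c' * k p p')"
    using sym g h
    by (intro arg_cong[where f=sum_list] map_cong refl)
       (force simp: sum_list_const_mult[symmetric] mult.assoc intro!: arg_cong[where f=sum_list] map_cong)
  finally show ?thesis by (simp add: pre_inner_def)
qed

lemma pre_inner_self_nonneg: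
  "pd_kernel k X \<Longrightarrow> set (map snd g) \<subseteq> X \<Longrightarrow> 0 \<le> pre_inner k g g"
  by (simp add: pd_kernel_def pre_sqnorm_eq_pre_inner)

lemma nonneg_quadratic_imp_discriminant_le:
  fixes a b c :: real
  assumes nonneg: "\<And>t. 0 \<le> a * t\<^sup>2 + 2 * b * t + c" and "0 \<le> a"
  shows "b\<^sup>2 \<le> a * c"
proof (cases "a = 0")
  case False
  with \<open>0 \<le> a\<close> have "0 < a" by simp
  have "0 \<le> a * (- b / a)\<^sup>2 + 2 * b * (- b / a) + c" by (rule nonneg)
  also have "\<dots> = c - b\<^sup>2 / a" using \<open>0 < a\<close> by (simp add: power2_eq_square field_simps)
  finally show ?thesis using \<open>0 < a\<close> by (simp add: field_simps)
next
  case True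
  have "b = 0"
  proof (rule ccontr)
    assume "b \<noteq> 0"
    have "0 \<le> a * (- (\<bar>c\<bar> + 1) / (2 * b))\<^sup>2 + 2 * b * (- (\<bar>c\<bar> + 1) / (2 * b)) + c"
      by (rule nonneg)
    then show False using True \<open>b \<noteq> 0\<close> by simp
  qed
  then show ?thesis using True by simp
qed

lemma pre_inner_Cauchy_Schwarz:
  assumes pd: "pd_kernel k X"
    and g: "set (map snd g) \<subseteq> X" and h: "set (map snd h) \<subseteq> X"
  shows "(pre_inner k g h)\<^sup>2 \<le> pre_inner k g g * pre_inner k h h"
proof -
  have sym: "\<forall>x\<in>X. \<forall>y\<in>X. k x y = k y x" using pd by (simp add: pd_kernel_def)
  have "0 \<le> pre_inner k h h * t\<^sup>2 + 2 * pre_inner k g h * t + pre_inner k g g" for t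
  proof -
    have "0 \<le> pre_inner k (g @ pre_scale t h) (g @ pre_scale t h)"
      by (rule pre_inner_self_nonneg[OF pd]) (use g h in auto)
    also have "\<dots> = pre_inner k h h * t\<^sup>2 + 2 * pre_inner k g h * t + pre_inner k g g"
      using pre_inner_commute[OF sym g h] pre_inner_commute[OF sym, of h "pre_scale t h"]
        pre_inner_commute[OF sym, of "pre_scale t h" g] g h
      by (simp add: pre_inner_append_left pre_inner_append_right pre_inner_pre_scale_right
          power2_eq_square algebra_simps)
    finally show ?thesis .
  qed
  from nonneg_quadratic_imp_discriminant_le[OF this pre_inner_self_nonneg[OF pd h]]
  show ?thesis by (simp add: mult.commute)
qed

lemma abs_pre_inner_le:
  assumes "pd_kernel k X" "set (map snd g) \<subseteq> X" "set (map snd h) \<subseteq> X"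
  shows "\<bar>pre_inner k g h\<bar> \<le> pre_norm k g * pre_norm k h"
proof -
  have "\<bar>pre_inner k g h\<bar> = sqrt ((pre_inner k g h)\<^sup>2)" by simp
  also have "\<dots> \<le> sqrt (pre_inner k g g * pre_inner k h h)"
    using pre_inner_Cauchy_Schwarz[OF assms] by (rule real_sqrt_le_mono)
  also have "\<dots> = pre_norm k g * pre_norm k h"
    by (simp add: pre_norm_def pre_sqnorm_eq_pre_inner real_sqrt_mult)
  finally show ?thesis .
qed

lemma pre_norm_nonneg: "pd_kernel k X \<Longrightarrow> set (map snd g) \<subseteq> X \<Longrightarrow> 0 \<le> pre_norm k g"
  by (simp add: pre_norm_def pre_sqnorm_eq_pre_inner pre_inner_self_nonneg)

lemma pre_norm_pre_neg [simp]: "pre_norm k (pre_neg h) = pre_norm k h"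
  by (simp add: pre_norm_def pre_sqnorm_eq_pre_inner pre_inner_pre_neg_left pre_inner_pre_neg_right)

lemma pre_norm_append_le:
  assumes pd: "pd_kernel k X" and g: "set (map snd g) \<subseteq> X" and h: "set (map snd h) \<subseteq> X"
  shows "pre_norm k (g @ h) \<le> pre_norm k g + pre_norm k h"
proof -
  have sym: "\<forall>x\<in>X. \<forall>y\<in>X. k x y = k y x" using pd by (simp add: pd_kernel_def)
  have "pre_inner k (g @ h) (g @ h) = pre_inner k g g + 2 * pre_inner k g h + pre_inner k h h"
    by (simp add: pre_inner_append_left pre_inner_append_right pre_inner_commute[OF sym h g])
  also have "\<dots> \<le> (pre_norm k g + pre_norm k h)\<^sup>2"
    using abs_pre_inner_le[OF pd g h] pre_inner_self_nonneg[OF pd g] pre_inner_self_nonneg[OF pd h]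
    by (simp add: pre_norm_def pre_sqnorm_eq_pre_inner power2_eq_square algebra_simps)
  finally show ?thesis
    using pre_norm_nonneg[OF pd g] pre_norm_nonneg[OF pd h]
    by (simp add: pre_norm_def pre_sqnorm_eq_pre_inner real_sqrt_le_iff real_le_lsqrt)
qed

lemma pre_sqnorm_cong_eval:
  assumes pd: "pd_kernel k X" and g: "set (map snd g) \<subseteq> X" and g': "set (map snd g') \<subseteq> X"
    and eq: "\<forall>y\<in>X. pre_eval k g y = pre_eval k g' y"
  shows "pre_sqnorm k g = pre_sqnorm k g'"
proof -
  have sym: "\<forall>x\<in>X. \<forall>y\<in>X. k x y = k y x" using pd by (simp add: pd_kernel_def)
  have "pre_inner k g g = pre_inner k g' g" by (rule pre_inner_cong_eval[OF g eq])
  also have "\<dots> = pre_inner k g g'" by (rule pre_inner_commute[OF sym g' g])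
  also have "\<dots> = pre_inner k g' g'" by (rule pre_inner_cong_eval[OF g' eq])
  finally show ?thesis by (simp add: pre_sqnorm_eq_pre_inner)
qed

lemma pre_norm_le_of_eval_add:
  assumes pd: "pd_kernel k X" and g: "set (map snd g) \<subseteq> X"
    and a: "set (map snd a) \<subseteq> X" and b: "set (map snd b) \<subseteq> X"
    and eq: "\<forall>y\<in>X. pre_eval k g y = pre_eval k a y + pre_eval k b y"
  shows "pre_norm k g \<le> pre_norm k a + pre_norm k b"
proof -
  have "pre_norm k g = pre_norm k (a @ b)"
    unfolding pre_norm_def using pre_sqnorm_cong_eval[OF pd g, of "a @ b"] a b eq by simp
  also have "\<dots> \<le> pre_norm k a + pre_norm k b" by (rule pre_norm_append_le[OF pd a b])
  finally show ?thesis .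
qed

lemma pre_norm_le_of_eval_diff:
  assumes pd: "pd_kernel k X" and g: "set (map snd g) \<subseteq> X"
    and a: "set (map snd a) \<subseteq> X" and b: "set (map snd b) \<subseteq> X"
    and eq: "\<forall>y\<in>X. pre_eval k g y = pre_eval k a y - pre_eval k b y"
  shows "pre_norm k g \<le> pre_norm k a + pre_norm k b"
  using pre_norm_le_of_eval_add[OF pd g a, of "pre_neg b"] b eq by simp

section \<open>The RKHS norm\<close>

lemma tendsto_sum_list:
  fixes F :: "'i \<Rightarrow> 'a \<Rightarrow> 'b::topological_monoid_add"
  assumes "\<And>q. q \<in> set l \<Longrightarrow> ((\<lambda>n. F n q) \<longlongrightarrow> L q) G"
  shows "((\<lambda>n. \<Sum>q\<leftarrow>l. F n q) \<longlongrightarrow> (\<Sum>q\<leftarrow>l. L q)) G"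
  using assms
proof (induction l)
  case (Cons a l)
  have "((\<lambda>n. F n a) \<longlongrightarrow> L a) G" by (rule Cons.prems) simp
  moreover have "((\<lambda>n. \<Sum>q\<leftarrow>l. F n q) \<longlongrightarrow> (\<Sum>q\<leftarrow>l. L q)) G"
    by (rule Cons.IH, rule Cons.prems) simp
  ultimately show ?case by (simp add: tendsto_add)
qed simp

lemma pre_norm_Cauchy_eventually_bounded:
  fixes d :: "nat \<Rightarrow> (real \<times> 'a) list"
  assumes pd: "pd_kernel k X" and d: "\<And>n. set (map snd (d n)) \<subseteq> X"
    and Cauchy: "\<And>e. e > 0 \<Longrightarrow> \<exists>N. \<forall>m\<ge>N. \<forall>n\<ge>N. pre_norm k (pre_diff (d m) (d n)) < e"
  obtains B N where "B > 0" and "\<forall>n\<ge>N. pre_norm k (d n) \<le> B"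
proof -
  obtain N where N: "\<forall>m\<ge>N. \<forall>n\<ge>N. pre_norm k (pre_diff (d m) (d n)) < 1"
    using Cauchy[of 1] by auto
  have "pre_norm k (d n) \<le> pre_norm k (d N) + 1" if "n \<ge> N" for n
  proof -
    have "pre_norm k (d n) \<le> pre_norm k (pre_diff (d n) (d N)) + pre_norm k (d N)"
      by (rule pre_norm_le_of_eval_add[OF pd d _ d]) (use d in simp_all)
    moreover have "pre_norm k (pre_diff (d n) (d N)) < 1" using N[rule_format, OF that, of N] by simp
    ultimately show ?thesis by simp
  qed
  moreover have "pre_norm k (d N) + 1 > 0" using pre_norm_nonneg[OF pd d[of N]] by simp
  ultimately show ?thesis using that by blast
qed

text \<open>This is what makes the RKHS norm well defined.\<close>

lemma Cauchy_pointwise_null_imp_pre_norm_null: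
  assumes pd: "pd_kernel k X" and d: "\<And>n. set (map snd (d n)) \<subseteq> X"
    and Cauchy: "\<And>e. e > 0 \<Longrightarrow> \<exists>N. \<forall>m\<ge>N. \<forall>n\<ge>N. pre_norm k (pre_diff (d m) (d n)) < e"
    and null: "\<And>y. y \<in> X \<Longrightarrow> (\<lambda>n. pre_eval k (d n) y) \<longlonglongrightarrow> 0"
  shows "(\<lambda>n. pre_norm k (d n)) \<longlonglongrightarrow> 0"
proof -
  have dd: "set (map snd (pre_diff (d m) (d n))) \<subseteq> X" for m n
    using d[of m] d[of n] by simp
  obtain B N1 where "B > 0" and bounded: "\<And>n. n \<ge> N1 \<Longrightarrow> pre_norm k (d n) \<le> B"
    using pre_norm_Cauchy_eventually_bounded[OF pd d Cauchy] by blast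
  have "(\<lambda>n. pre_inner k (d n) (d n)) \<longlonglongrightarrow> 0"
    unfolding tendsto_iff
  proof (intro allI impI)
    fix r :: real assume "r > 0"
    obtain N2 where N2: "\<forall>m\<ge>N2. \<forall>n\<ge>N2. pre_norm k (pre_diff (d m) (d n)) < r / (2 * B)"
      using Cauchy[of "r / (2 * B)"] \<open>r > 0\<close> \<open>B > 0\<close> by auto
    define M where "M = max N1 N2"
    have M: "M \<ge> N1" "\<forall>n\<ge>M. pre_norm k (pre_diff (d n) (d M)) < r / (2 * B)"
      using N2 by (auto simp: M_def)
    have "(\<lambda>n. pre_inner k (d n) (d M)) \<longlonglongrightarrow> (\<Sum>q\<leftarrow>d M. 0)"
      unfolding pre_inner_eq_sum_eval
    proof (rule tendsto_sum_list)
      fix q assume q: "q \<in> set (d M)"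
      obtain c p where "q = (c, p)" by force
      with q d[of M] have "p \<in> X" by force
      from tendsto_mult[OF tendsto_const null[OF this]]
      show "(\<lambda>n. case q of (c',p') \<Rightarrow> c' * pre_eval k (d n) p') \<longlonglongrightarrow> 0"
        by (simp add: \<open>q = (c, p)\<close>)
    qed
    then have "eventually (\<lambda>n. \<bar>pre_inner k (d n) (d M)\<bar> < r / 2) sequentially"
      using \<open>r > 0\<close> by (simp add: tendsto_iff dist_real_def del: divide_const_simps)
    moreover have "eventually (\<lambda>n. n \<ge> M) sequentially" by (rule eventually_ge_at_top)
    ultimately show "eventually (\<lambda>n. dist (pre_inner k (d n) (d n)) 0 < r) sequentially"
    proof eventually_elim
      case (elim n)
      have "\<bar>pre_inner k (d n) (pre_diff (d n) (d M))\<bar>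
          \<le> pre_norm k (d n) * pre_norm k (pre_diff (d n) (d M))"
        by (rule abs_pre_inner_le[OF pd d dd])
      also have "\<dots> \<le> B * (r / (2 * B))"
        using bounded[of n] M elim(2) pre_norm_nonneg[OF pd dd, of n M] \<open>B > 0\<close>
        by (intro mult_mono) auto
      finally have "\<bar>pre_inner k (d n) (pre_diff (d n) (d M))\<bar> \<le> r / 2"
        using \<open>B > 0\<close> by simp
      moreover have "pre_inner k (d n) (d n)
          = pre_inner k (d n) (pre_diff (d n) (d M)) + pre_inner k (d n) (d M)"
        by (simp add: pre_diff_eq_append_pre_neg pre_inner_append_right pre_inner_pre_neg_right)
      ultimately show ?case using elim(1) by (simp add: dist_real_def)
    qed
  qed
  then show ?thesis
    unfolding pre_norm_def pre_sqnorm_eq_pre_inner using tendsto_real_sqrt by fastforce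
qed

lemma rkhs_seq_centres: "rkhs_seq k X gs f \<Longrightarrow> set (map snd (gs n)) \<subseteq> X"
  unfolding rkhs_seq_def by blast

lemma rkhs_seq_tendsto_eval:
  "rkhs_seq k X gs f \<Longrightarrow> y \<in> X \<Longrightarrow> (\<lambda>n. pre_eval k (gs n) y) \<longlonglongrightarrow> f y"
  unfolding rkhs_seq_def by blast

lemma rkhs_seq_Cauchy:
  assumes "rkhs_seq k X gs f" and "e > 0"
  shows "\<exists>N. \<forall>m\<ge>N. \<forall>n\<ge>N. pre_norm k (pre_diff (gs m) (gs n)) < e"
proof -
  from assms obtain N where "\<forall>m\<ge>N. \<forall>n\<ge>N. pre_sqnorm k (pre_diff (gs m) (gs n)) < e\<^sup>2"
    unfolding rkhs_seq_def by (meson zero_less_power)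
  then have "\<forall>m\<ge>N. \<forall>n\<ge>N. pre_norm k (pre_diff (gs m) (gs n)) < e"
    using real_sqrt_less_mono[of _ "e\<^sup>2"] \<open>e > 0\<close> by (simp add: pre_norm_def)
  then show ?thesis by blast
qed

lemma rkhs_seq_pre_norm_convergent:
  assumes pd: "pd_kernel k X" and seq: "rkhs_seq k X gs f"
  shows "convergent (\<lambda>n. pre_norm k (gs n))"
proof -
  note gs = rkhs_seq_centres[OF seq]
  have dd: "set (map snd (pre_diff (gs m) (gs n))) \<subseteq> X" for m n
    using gs[of m] gs[of n] by simp
  have "Cauchy (\<lambda>n. pre_norm k (gs n))"
  proof (rule CauchyI)
    fix e :: real assume "e > 0"
    then obtain N where N: "\<forall>m\<ge>N. \<forall>n\<ge>N. pre_norm k (pre_diff (gs m) (gs n)) < e"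
      using rkhs_seq_Cauchy[OF seq] by blast
    have "norm (pre_norm k (gs m) - pre_norm k (gs n)) < e" if "m \<ge> N" "n \<ge> N" for m n
    proof -
      have "pre_norm k (gs m) \<le> pre_norm k (pre_diff (gs m) (gs n)) + pre_norm k (gs n)"
        by (rule pre_norm_le_of_eval_add[OF pd gs dd gs]) simp
      moreover have "pre_norm k (gs n) \<le> pre_norm k (gs m) + pre_norm k (pre_diff (gs m) (gs n))"
        by (rule pre_norm_le_of_eval_diff[OF pd gs gs dd]) simp
      ultimately show ?thesis using N[rule_format, OF that] by simp
    qed
    then show "\<exists>M. \<forall>m\<ge>M. \<forall>n\<ge>M. norm (pre_norm k (gs m) - pre_norm k (gs n)) < e" by blast
  qed
  then show ?thesis by (simp add: Cauchy_convergent_iff)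
qed

lemma rkhs_seq_pre_norm_diff_null:
  assumes pd: "pd_kernel k X" and seq: "rkhs_seq k X gs f" and seq': "rkhs_seq k X hs f"
  shows "(\<lambda>n. pre_norm k (gs n) - pre_norm k (hs n)) \<longlonglongrightarrow> 0"
proof -
  note gs = rkhs_seq_centres[OF seq] and hs = rkhs_seq_centres[OF seq']
  define d where "d n = pre_diff (gs n) (hs n)" for n
  have d: "set (map snd (d n)) \<subseteq> X" for n using gs[of n] hs[of n] by (simp add: d_def)
  have null: "(\<lambda>n. pre_norm k (d n)) \<longlonglongrightarrow> 0"
  proof (rule Cauchy_pointwise_null_imp_pre_norm_null[OF pd d])
    fix e :: real assume "e > 0"
    obtain N1 where N1: "\<forall>m\<ge>N1. \<forall>n\<ge>N1. pre_norm k (pre_diff (gs m) (gs n)) < e/2"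
      using rkhs_seq_Cauchy[OF seq, of "e/2"] \<open>e > 0\<close> by auto
    obtain N2 where N2: "\<forall>m\<ge>N2. \<forall>n\<ge>N2. pre_norm k (pre_diff (hs m) (hs n)) < e/2"
      using rkhs_seq_Cauchy[OF seq', of "e/2"] \<open>e > 0\<close> by auto
    have "pre_norm k (pre_diff (d m) (d n)) < e" if "m \<ge> max N1 N2" "n \<ge> max N1 N2" for m n
    proof -
      have "pre_norm k (pre_diff (d m) (d n))
          \<le> pre_norm k (pre_diff (gs m) (gs n)) + pre_norm k (pre_diff (hs m) (hs n))"
        by (rule pre_norm_le_of_eval_diff[OF pd]) (use d gs hs in \<open>simp_all add: d_def\<close>)
      then show ?thesis using N1[rule_format, of m n] N2[rule_format, of m n] that by simp
    qed
    then show "\<exists>N. \<forall>m\<ge>N. \<forall>n\<ge>N. pre_norm k (pre_diff (d m) (d n)) < e" by blast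
  next
    fix y assume "y \<in> X"
    show "(\<lambda>n. pre_eval k (d n) y) \<longlonglongrightarrow> 0"
      using tendsto_diff[OF rkhs_seq_tendsto_eval[OF seq \<open>y \<in> X\<close>] rkhs_seq_tendsto_eval[OF seq' \<open>y \<in> X\<close>]]
      by (simp add: d_def)
  qed
  have bound: "\<forall>n. norm (pre_norm k (gs n) - pre_norm k (hs n)) \<le> pre_norm k (d n)"
  proof
    fix n
    have "pre_norm k (gs n) \<le> pre_norm k (d n) + pre_norm k (hs n)"
      by (rule pre_norm_le_of_eval_add[OF pd gs d hs]) (simp add: d_def)
    moreover have "pre_norm k (hs n) \<le> pre_norm k (gs n) + pre_norm k (d n)"
      by (rule pre_norm_le_of_eval_diff[OF pd hs gs d]) (simp add: d_def)
    ultimately show "norm (pre_norm k (gs n) - pre_norm k (hs n)) \<le> pre_norm k (d n)" by simp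
  qed
  from bound null show ?thesis by (rule Lim_null_comparison[OF always_eventually])
qed

lemma tendsto_rkhs_norm:
  assumes pd: "pd_kernel k X" and seq: "rkhs_seq k X gs f"
  shows "(\<lambda>n. pre_norm k (gs n)) \<longlonglongrightarrow> rkhs_norm k X f"
proof -
  obtain L where L: "(\<lambda>n. pre_norm k (gs n)) \<longlonglongrightarrow> L"
    using rkhs_seq_pre_norm_convergent[OF pd seq] by (auto simp: convergent_def)
  have "rkhs_norm k X f = L"
    unfolding rkhs_norm_def
  proof (rule the_equality)
    show "\<exists>gs. rkhs_seq k X gs f \<and> (\<lambda>n. sqrt (pre_sqnorm k (gs n))) \<longlonglongrightarrow> L"
      using seq L by (auto simp: pre_norm_def)
  next
    fix L' assume "\<exists>hs. rkhs_seq k X hs f \<and> (\<lambda>n. sqrt (pre_sqnorm k (hs n))) \<longlonglongrightarrow> L'"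
    then obtain hs where hs: "rkhs_seq k X hs f" "(\<lambda>n. pre_norm k (hs n)) \<longlonglongrightarrow> L'"
      by (auto simp: pre_norm_def)
    have "(\<lambda>n. pre_norm k (gs n) - pre_norm k (hs n)) \<longlonglongrightarrow> L - L'"
      using L hs(2) by (rule tendsto_diff)
    with rkhs_seq_pre_norm_diff_null[OF pd seq hs(1)] have "L - L' = 0"
      by (rule LIMSEQ_unique[rotated])
    then show "L' = L" by simp
  qed
  with L show ?thesis by simp
qed

lemma rkhs_norm_nonneg:
  assumes pd: "pd_kernel k X" and "in_rkhs k X f"
  shows "0 \<le> rkhs_norm k X f"
proof -
  obtain gs where seq: "rkhs_seq k X gs f" using assms(2) by (auto simp: in_rkhs_def)
  show ?thesis
    by (rule LIMSEQ_le_const[OF tendsto_rkhs_norm[OF pd seq]])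
       (use pre_norm_nonneg[OF pd rkhs_seq_centres[OF seq]] in auto)
qed

section \<open>Posterior mean and variance\<close>

lemma sum_list_map_upt: "(\<Sum>j\<leftarrow>[0..<n]. f j) = (\<Sum>j<n. f j)"
  by (simp add: interv_sum_list_conv_sum_set_nat atLeast0LessThan)

definition gram_form :: "('a \<Rightarrow> 'a \<Rightarrow> real) \<Rightarrow> (nat \<Rightarrow> 'a) \<Rightarrow> nat \<Rightarrow> (nat \<Rightarrow> real) \<Rightarrow> (nat \<Rightarrow> real) \<Rightarrow> real" where
  "gram_form k p n u w = (\<Sum>i<n. \<Sum>j<n. u i * w j * k (p i) (p j))"

lemma gram_form_eq_sum: "gram_form k p n u w = (\<Sum>j<n. w j * (\<Sum>i<n. u i * k (p i) (p j)))"
  unfolding gram_form_def by (subst sum.swap) (simp add: sum_distrib_left algebra_simps)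

lemma gram_form_nonneg:
  assumes "pd_kernel k X" and "\<forall>i<n. p i \<in> X"
  shows "0 \<le> gram_form k p n u u"
proof -
  define g where "g = map (\<lambda>i. (u i, p i)) [0..<n]"
  have "0 \<le> pre_inner k g g"
    by (rule pre_inner_self_nonneg[OF assms(1)]) (use assms(2) in \<open>auto simp: g_def\<close>)
  also have "pre_inner k g g = gram_form k p n u u"
    by (simp add: g_def pre_inner_def gram_form_def sum_list_map_upt)
  finally show ?thesis .
qed

lemma gram_form_commute:
  assumes "\<forall>x\<in>X. \<forall>y\<in>X. k x y = k y x" and "\<forall>i<n. p i \<in> X"
  shows "gram_form k p n u w = gram_form k p n w u"
  unfolding gram_form_def using assms
  by (subst sum.swap) (auto simp: algebra_simps intro!: sum.cong)

lemma gram_form_diff: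
  "gram_form k p n (\<lambda>i. u i - w i) (\<lambda>i. u i - w i)
     = gram_form k p n u u - gram_form k p n u w - gram_form k p n w u + gram_form k p n w w"
  unfolding gram_form_def by (simp add: algebra_simps sum_subtractf sum.distrib)

definition kernel_residual :: "'a \<Rightarrow> (nat \<Rightarrow> 'a) \<Rightarrow> nat \<Rightarrow> (nat \<Rightarrow> real) \<Rightarrow> (real \<times> 'a) list" where
  "kernel_residual y p n u = (1, y) # map (\<lambda>j. (- u j, p j)) [0..<n]"

lemma centres_kernel_residual:
  "y \<in> X \<Longrightarrow> \<forall>j<n. p j \<in> X \<Longrightarrow> set (map snd (kernel_residual y p n u)) \<subseteq> X"
  by (auto simp: kernel_residual_def)

lemma pre_eval_kernel_residual:
  "pre_eval k (kernel_residual y p n u) q = k y q - (\<Sum>j<n. u j * k (p j) q)"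
  by (simp add: kernel_residual_def pre_eval_def o_def sum_list_map_upt sum_negf)

lemma pre_inner_kernel_residual:
  "pre_inner k g (kernel_residual y p n u) = pre_eval k g y - (\<Sum>j<n. u j * pre_eval k g (p j))"
  by (simp add: kernel_residual_def pre_inner_eq_sum_eval o_def sum_list_map_upt sum_negf)

lemma pre_sqnorm_kernel_residual:
  assumes sym: "\<forall>x\<in>X. \<forall>y\<in>X. k x y = k y x" and "y \<in> X" and p: "\<forall>j<n. p j \<in> X"
  shows "pre_sqnorm k (kernel_residual y p n u)
      = k y y - 2 * (\<Sum>j<n. u j * k (p j) y) + gram_form k p n u u"
proof -
  have "(\<Sum>j<n. u j * k y (p j)) = (\<Sum>j<n. u j * k (p j) y)"
    using sym \<open>y \<in> X\<close> p by (intro sum.cong) auto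
  then show ?thesis
    by (simp add: pre_sqnorm_eq_pre_inner pre_inner_kernel_residual pre_eval_kernel_residual
        gram_form_eq_sum sum_subtractf sum_distrib_left algebra_simps)
qed

lemma invertible_mat_Kmat_0: "invertible_mat (Kmat k xs 0)"
  by (auto simp: invertible_mat_def inverts_mat_def Kmat_def intro!: exI[of _ "1\<^sub>m 0"] eq_matI)

lemma invertible_mat_imp_det_nonzero:
  fixes A :: "'a::comm_ring_1 mat"
  assumes A: "A \<in> carrier_mat n n" and "invertible_mat A"
  shows "det A \<noteq> 0"
proof -
  from assms obtain B where AB: "A * B = 1\<^sub>m n" and BA: "B * A = 1\<^sub>m (dim_row B)"
    unfolding invertible_mat_def inverts_mat_def by auto
  have B: "B \<in> carrier_mat n n"
    using arg_cong[OF AB, of dim_col] arg_cong[OF BA, of dim_col] A by auto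
  have "det A * det B = 1" using det_mult[OF A B] AB by simp
  then show ?thesis by auto
qed

lemma mat_inverse_eq_Some:
  fixes A :: "'a::field mat"
  assumes A: "A \<in> carrier_mat n n" and "det A \<noteq> 0"
  obtains B where "mat_inverse A = Some B" "A * B = 1\<^sub>m n" "B * A = 1\<^sub>m n" "B \<in> carrier_mat n n"
proof -
  have "A \<in> Units (ring_mat TYPE('a) n ())" by (rule det_non_zero_imp_unit[OF A \<open>det A \<noteq> 0\<close>])
  then obtain B where "mat_inverse A = Some B" using mat_inverse(1)[OF A] by fastforce
  with mat_inverse(2)[OF A] that show ?thesis by blast
qed

lemma Kinv_mult_Kmat:
  assumes "invertible_mat (Kmat k xs t)" and "i < t" and "l < t"
  shows "(\<Sum>j<t. Kinv k xs t $$ (i,j) * k (xs (Suc j)) (xs (Suc l))) = (if i = l then 1 else 0)"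
proof -
  have K: "Kmat k xs t \<in> carrier_mat t t" by (simp add: Kmat_def)
  obtain C where C: "mat_inverse (Kmat k xs t) = Some C" "C * Kmat k xs t = 1\<^sub>m t" "C \<in> carrier_mat t t"
    using mat_inverse_eq_Some[OF K invertible_mat_imp_det_nonzero[OF K assms(1)]] by metis
  have "(C * Kmat k xs t) $$ (i,l) = (\<Sum>j<t. C $$ (i,j) * k (xs (Suc j)) (xs (Suc l)))"
    using C(3) assms(2,3) by (simp add: scalar_prod_def Kmat_def atLeast0LessThan)
  with C(2) assms(2,3) show ?thesis by (simp add: Kinv_def C(1))
qed

definition post_weight :: "('a \<Rightarrow> 'a \<Rightarrow> real) \<Rightarrow> (nat \<Rightarrow> 'a) \<Rightarrow> nat \<Rightarrow> 'a \<Rightarrow> nat \<Rightarrow> real" where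
  "post_weight k xs t y j = (\<Sum>i<t. k y (xs (Suc i)) * Kinv k xs t $$ (i,j))"

lemma post_mean_eq_sum_post_weight:
  "post_mean k g xs t y = (\<Sum>j<t. post_weight k xs t y j * g (xs (Suc j)))"
  unfolding post_mean_def post_weight_def by (subst sum.swap) (simp add: sum_distrib_right)

lemma post_var_eq_sum_post_weight:
  "post_var k xs t y = k y y - (\<Sum>j<t. post_weight k xs t y j * k y (xs (Suc j)))"
  unfolding post_var_def post_weight_def by (subst sum.swap) (simp add: sum_distrib_right)

lemma sum_post_weight_Kmat:
  assumes "invertible_mat (Kmat k xs t)" and "l < t"
  shows "(\<Sum>j<t. post_weight k xs t y j * k (xs (Suc j)) (xs (Suc l))) = k y (xs (Suc l))"
proof -
  have "(\<Sum>j<t. post_weight k xs t y j * k (xs (Suc j)) (xs (Suc l)))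
      = (\<Sum>i<t. k y (xs (Suc i)) * (\<Sum>j<t. Kinv k xs t $$ (i,j) * k (xs (Suc j)) (xs (Suc l))))"
    unfolding post_weight_def sum_distrib_right sum_distrib_left mult.assoc by (rule sum.swap)
  also have "\<dots> = k y (xs (Suc l))"
    using assms by (simp add: Kinv_mult_Kmat if_distrib cong: if_cong)
  finally show ?thesis .
qed

abbreviation post_residual :: "('a \<Rightarrow> 'a \<Rightarrow> real) \<Rightarrow> (nat \<Rightarrow> 'a) \<Rightarrow> nat \<Rightarrow> 'a \<Rightarrow> (real \<times> 'a) list" where
  "post_residual k xs t y \<equiv> kernel_residual y (\<lambda>j. xs (Suc j)) t (post_weight k xs t y)"

lemma pre_sqnorm_post_residual:
  assumes sym: "\<forall>x\<in>X. \<forall>y\<in>X. k x y = k y x" and y: "y \<in> X" and xs: "\<forall>j<t. xs (Suc j) \<in> X"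
    and inv: "invertible_mat (Kmat k xs t)"
  shows "pre_sqnorm k (post_residual k xs t y) = post_var k xs t y"
proof -
  have "pre_eval k (post_residual k xs t y) (xs (Suc l)) = 0" if "l < t" for l
    using sum_post_weight_Kmat[OF inv that] by (simp add: pre_eval_kernel_residual)
  then have "pre_sqnorm k (post_residual k xs t y) = pre_eval k (post_residual k xs t y) y"
    by (simp add: pre_sqnorm_eq_pre_inner pre_inner_kernel_residual)
  also have "\<dots> = post_var k xs t y"
    using sym y xs by (auto simp: pre_eval_kernel_residual post_var_eq_sum_post_weight intro!: sum.cong)
  finally show ?thesis .
qed

lemma post_var_nonneg:
  assumes pd: "pd_kernel k X" and "y \<in> X" and "\<forall>j<t. xs (Suc j) \<in> X"
    and "invertible_mat (Kmat k xs t)"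
  shows "0 \<le> post_var k xs t y"
proof -
  have "0 \<le> pre_sqnorm k (post_residual k xs t y)"
    using pd centres_kernel_residual[OF assms(2,3)] by (simp add: pd_kernel_def)
  with pd show ?thesis by (simp add: pd_kernel_def pre_sqnorm_post_residual[OF _ assms(2-)])
qed

lemma post_var_le_kernel_diag:
  assumes pd: "pd_kernel k X" and y: "y \<in> X" and xs: "\<forall>j<t. xs (Suc j) \<in> X"
    and inv: "invertible_mat (Kmat k xs t)"
  shows "post_var k xs t y \<le> k y y"
proof -
  let ?\<beta> = "post_weight k xs t y"
  have "(\<Sum>j<t. ?\<beta> j * k y (xs (Suc j))) = gram_form k (\<lambda>j. xs (Suc j)) t ?\<beta> ?\<beta>"
    using sum_post_weight_Kmat[OF inv] by (simp add: gram_form_eq_sum mult.commute)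
  moreover have "0 \<le> gram_form k (\<lambda>j. xs (Suc j)) t ?\<beta> ?\<beta>"
    by (rule gram_form_nonneg[OF pd]) (use xs in auto)
  ultimately show ?thesis by (simp add: post_var_eq_sum_post_weight)
qed

lemma pre_eval_post_mean_error_le:
  assumes pd: "pd_kernel k X" and g: "set (map snd g) \<subseteq> X" and y: "y \<in> X"
    and xs: "\<forall>j<t. xs (Suc j) \<in> X" and inv: "invertible_mat (Kmat k xs t)"
  shows "\<bar>pre_eval k g y - post_mean k (pre_eval k g) xs t y\<bar> \<le> pre_norm k g * sqrt (post_var k xs t y)"
proof -
  have sym: "\<forall>x\<in>X. \<forall>y\<in>X. k x y = k y x" using pd by (simp add: pd_kernel_def)
  have "\<bar>pre_inner k g (post_residual k xs t y)\<bar> \<le> pre_norm k g * pre_norm k (post_residual k xs t y)"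
    by (rule abs_pre_inner_le[OF pd g centres_kernel_residual[OF y xs]])
  then show ?thesis
    by (simp add: pre_inner_kernel_residual post_mean_eq_sum_post_weight pre_norm_def
        pre_sqnorm_post_residual[OF sym y xs inv])
qed

lemma rkhs_post_mean_error_le:
  assumes pd: "pd_kernel k X" and f: "in_rkhs k X f" and y: "y \<in> X"
    and xs: "\<forall>j<t. xs (Suc j) \<in> X" and inv: "invertible_mat (Kmat k xs t)"
  shows "\<bar>f y - post_mean k f xs t y\<bar> \<le> rkhs_norm k X f * sqrt (post_var k xs t y)"
proof -
  obtain gs where seq: "rkhs_seq k X gs f" using f by (auto simp: in_rkhs_def)
  have "(\<lambda>n. \<bar>pre_eval k (gs n) y - post_mean k (pre_eval k (gs n)) xs t y\<bar>)
      \<longlonglongrightarrow> \<bar>f y - post_mean k f xs t y\<bar>"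
    unfolding post_mean_def using xs by (intro tendsto_intros rkhs_seq_tendsto_eval[OF seq] y) auto
  moreover have "(\<lambda>n. pre_norm k (gs n) * sqrt (post_var k xs t y))
      \<longlonglongrightarrow> rkhs_norm k X f * sqrt (post_var k xs t y)"
    by (intro tendsto_intros tendsto_rkhs_norm[OF pd seq])
  ultimately show ?thesis
    by (rule LIMSEQ_le)
       (use pre_eval_post_mean_error_le[OF pd rkhs_seq_centres[OF seq] y xs inv] in auto)
qed

section \<open>Determinants of regularized kernel matrices\<close>

lemma det_carrier_mat_0: "(A :: 'a::comm_ring_1 mat) \<in> carrier_mat 0 0 \<Longrightarrow> det A = 1"
  by (subst det_upper_triangular[of A 0]) (auto simp: upper_triangular_def diag_mat_def)

lemma nonsingular_system_solvable:
  fixes A :: "'a::field mat"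
  assumes A: "A \<in> carrier_mat n n" and "det A \<noteq> 0"
  obtains z where "\<forall>i<n. (\<Sum>l<n. A $$ (i,l) * z l) = y i"
proof -
  obtain B where AB: "A * B = 1\<^sub>m n" and B: "B \<in> carrier_mat n n"
    using mat_inverse_eq_Some[OF assms] by metis
  define z where "z l = (\<Sum>j<n. B $$ (l,j) * y j)" for l
  have "(\<Sum>l<n. A $$ (i,l) * z l) = y i" if i: "i < n" for i
  proof -
    have "(\<Sum>l<n. A $$ (i,l) * z l) = (\<Sum>j<n. (\<Sum>l<n. A $$ (i,l) * B $$ (l,j)) * y j)"
      unfolding z_def sum_distrib_left sum_distrib_right mult.assoc by (rule sum.swap)
    also have "\<dots> = (\<Sum>j<n. (A * B) $$ (i,j) * y j)"
      using A B i by (intro sum.cong refl) (simp add: scalar_prod_def atLeast0LessThan)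
    also have "\<dots> = (\<Sum>j<n. if i = j then y j else 0)"
      using i by (intro sum.cong refl) (simp add: AB)
    also have "\<dots> = y i" using i by simp
    finally show ?thesis .
  qed
  then show ?thesis by (rule that[rule_format])
qed

text \<open>Schur complement expansion of a determinant along its last row and column: z solves
  the system whose matrix is the leading n \<times> n block and whose right-hand side is the last
  column.\<close>

lemma det_bordered:
  fixes M :: "'a::comm_ring_1 mat"
  assumes M: "M \<in> carrier_mat (Suc n) (Suc n)"
    and z: "\<forall>i<n. (\<Sum>l<n. M $$ (i,l) * z l) = M $$ (i,n)"
  shows "det M = det (mat n n (\<lambda>(i,j). M $$ (i,j))) * (M $$ (n,n) - (\<Sum>l<n. M $$ (n,l) * z l))"
proof -
  define A where "A = mat n n (\<lambda>(i,j). M $$ (i,j))"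
  define R where "R = mat 1 n (\<lambda>(_,j). M $$ (n,j))"
  define S where "S = mat 1 1 (\<lambda>_. M $$ (n,n) - (\<Sum>l<n. M $$ (n,l) * z l))"
  define E where "E = mat (Suc n) (Suc n)
     (\<lambda>(i,j). if j = n then (if i = n then 1 else - z i) else (if i = j then 1 else 0))"
  have E: "E \<in> carrier_mat (Suc n) (Suc n)" by (simp add: E_def)
  have "det E = 1"
    by (subst det_upper_triangular[OF _ E])
       (auto simp: upper_triangular_def E_def prod_list_diag_prod)
  have "(M * E) $$ (i,j) = four_block_mat A (0\<^sub>m n 1) R S $$ (i,j)"
    if i: "i < Suc n" and j: "j < Suc n" for i j
  proof (cases "j < n")
    case True
    have "(M * E) $$ (i,j) = (\<Sum>l<Suc n. M $$ (i,l) * E $$ (l,j))"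
      using M E i j by (simp add: scalar_prod_def atLeast0LessThan)
    also have "\<dots> = M $$ (i,j)"
      using True by (simp add: E_def if_distrib cong: if_cong)
    finally show ?thesis
      using True i by (cases "i < n") (auto simp: A_def R_def S_def less_Suc_eq)
  next
    case False
    then have "j = n" using j by simp
    have "(M * E) $$ (i,j) = M $$ (i,n) - (\<Sum>l<n. M $$ (i,l) * z l)"
      using M E i j \<open>j = n\<close> by (simp add: scalar_prod_def atLeast0LessThan E_def sum_negf)
    then show ?thesis
      using z i \<open>j = n\<close> by (cases "i < n") (auto simp: A_def R_def S_def less_Suc_eq)
  qed
  then have "M * E = four_block_mat A (0\<^sub>m n 1) R S"
    using M E by (intro eq_matI) (auto simp: A_def R_def S_def)
  then have "det M = det A * det S"
    using det_mult[OF M E] \<open>det E = 1\<close>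
      det_four_block_mat_upper_right_zero_col[of A n "0\<^sub>m n 1" R S]
    by (simp add: A_def R_def S_def)
  then show ?thesis by (simp add: A_def S_def det_single)
qed

lemma Schur_correction_bounds:
  fixes c :: real and p :: "nat \<Rightarrow> 'a"
  assumes pd: "pd_kernel k X" and y: "y \<in> X" and p: "\<forall>i<n. p i \<in> X" and "c > 0"
    and z: "\<forall>i<n. z i + c * (\<Sum>l<n. k (p i) (p l) * z l) = c * k (p i) y"
  shows "0 \<le> (\<Sum>i<n. z i * k (p i) y)"
    and "(\<Sum>i<n. z i * k (p i) y) \<le> k y y"
    and "\<forall>l<n. (\<Sum>j<n. \<beta> j * k (p j) (p l)) = k (p l) y
           \<Longrightarrow> (\<Sum>i<n. z i * k (p i) y) \<le> (\<Sum>j<n. \<beta> j * k (p j) y)"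
proof -
  have sym: "\<forall>x\<in>X. \<forall>y\<in>X. k x y = k y x" using pd by (simp add: pd_kernel_def)
  define bz where "bz = (\<Sum>i<n. z i * k (p i) y)"
  let ?G = "gram_form k p n"
  have "c * bz = (\<Sum>i<n. z i * (c * k (p i) y))"
    by (simp add: bz_def sum_distrib_left algebra_simps)
  also have "\<dots> = (\<Sum>i<n. z i * (z i + c * (\<Sum>l<n. k (p i) (p l) * z l)))"
    using z by simp
  also have "\<dots> = (\<Sum>i<n. z i * z i) + c * ?G z z"
    by (simp add: gram_form_def algebra_simps sum.distrib sum_distrib_left)
  finally have energy: "c * bz = (\<Sum>i<n. z i * z i) + c * ?G z z" .
  have Gzz: "0 \<le> ?G z z" by (rule gram_form_nonneg[OF pd p])
  have "0 \<le> (\<Sum>i<n. z i * z i)" by (simp add: sum_nonneg)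
  with energy have "c * ?G z z \<le> c * bz" by linarith
  then have Gzz_le: "?G z z \<le> bz" using \<open>c > 0\<close> by simp
  show "0 \<le> (\<Sum>i<n. z i * k (p i) y)" using Gzz Gzz_le by (simp add: bz_def)
  have "0 \<le> pre_sqnorm k (kernel_residual y p n z)"
    using pd centres_kernel_residual[OF y p] by (simp add: pd_kernel_def)
  then have "0 \<le> k y y - 2 * bz + ?G z z"
    by (simp add: pre_sqnorm_kernel_residual[OF sym y p] bz_def)
  then show "(\<Sum>i<n. z i * k (p i) y) \<le> k y y" using Gzz_le by (simp add: bz_def)
  assume \<beta>: "\<forall>l<n. (\<Sum>j<n. \<beta> j * k (p j) (p l)) = k (p l) y"
  have G\<beta>\<beta>: "?G \<beta> \<beta> = (\<Sum>j<n. \<beta> j * k (p j) y)"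
    using \<beta> by (simp add: gram_form_eq_sum)
  have G\<beta>z: "?G \<beta> z = bz" and Gz\<beta>: "?G z \<beta> = bz"
    using \<beta> gram_form_commute[OF sym p, of z \<beta>] by (simp_all add: gram_form_eq_sum bz_def)
  have "0 \<le> ?G (\<lambda>i. \<beta> i - z i) (\<lambda>i. \<beta> i - z i)" by (rule gram_form_nonneg[OF pd p])
  then show "(\<Sum>i<n. z i * k (p i) y) \<le> (\<Sum>j<n. \<beta> j * k (p j) y)"
    using Gzz_le by (simp add: gram_form_diff G\<beta>\<beta> G\<beta>z Gz\<beta> bz_def)
qed

definition regularized_Kmat :: "('a \<Rightarrow> 'a \<Rightarrow> real) \<Rightarrow> (nat \<Rightarrow> 'a) \<Rightarrow> real \<Rightarrow> nat \<Rightarrow> real mat" where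
  "regularized_Kmat k xs c n = 1\<^sub>m n + c \<cdot>\<^sub>m Kmat k xs n"

lemma regularized_Kmat_carrier: "regularized_Kmat k xs c n \<in> carrier_mat n n"
  by (simp add: regularized_Kmat_def Kmat_def)

lemma regularized_Kmat_index:
  "i < n \<Longrightarrow> j < n \<Longrightarrow>
    regularized_Kmat k xs c n $$ (i,j) = (if i = j then 1 else 0) + c * k (xs (Suc i)) (xs (Suc j))"
  by (simp add: regularized_Kmat_def Kmat_def)

lemma det_regularized_Kmat_0: "det (regularized_Kmat k xs c 0) = 1"
  by (rule det_carrier_mat_0[OF regularized_Kmat_carrier])

lemma det_regularized_Kmat_Suc_eq:
  assumes z: "\<forall>i<n. (\<Sum>l<n. regularized_Kmat k xs c n $$ (i,l) * z l) = c * k (xs (Suc i)) (xs (Suc n))"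
  shows "det (regularized_Kmat k xs c (Suc n)) = det (regularized_Kmat k xs c n)
      * (1 + c * k (xs (Suc n)) (xs (Suc n)) - c * (\<Sum>l<n. k (xs (Suc n)) (xs (Suc l)) * z l))"
proof -
  let ?A = "regularized_Kmat k xs c n" and ?M = "regularized_Kmat k xs c (Suc n)"
  have "det ?M = det (mat n n (\<lambda>(i,j). ?M $$ (i,j))) * (?M $$ (n,n) - (\<Sum>l<n. ?M $$ (n,l) * z l))"
    by (rule det_bordered[OF regularized_Kmat_carrier]) (use z in \<open>simp add: regularized_Kmat_index\<close>)
  also have "mat n n (\<lambda>(i,j). ?M $$ (i,j)) = ?A"
    by (rule eq_matI) (simp_all add: regularized_Kmat_index regularized_Kmat_carrier[THEN carrier_matD(1)]
        regularized_Kmat_carrier[THEN carrier_matD(2)])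
  finally show ?thesis by (simp add: regularized_Kmat_index sum_distrib_left mult.assoc)
qed

lemma det_regularized_Kmat_Suc:
  assumes pd: "pd_kernel k X" and xs: "\<forall>i\<in>{1..Suc n}. xs i \<in> X" and "c > 0"
    and det: "det (regularized_Kmat k xs c n) \<noteq> 0"
  obtains s where "det (regularized_Kmat k xs c (Suc n)) = det (regularized_Kmat k xs c n) * s"
    and "1 \<le> s" and "s \<le> 1 + c * k (xs (Suc n)) (xs (Suc n))"
    and "invertible_mat (Kmat k xs n) \<Longrightarrow> 1 + c * post_var k xs n (xs (Suc n)) \<le> s"
proof -
  have sym: "\<forall>x\<in>X. \<forall>y\<in>X. k x y = k y x" using pd by (simp add: pd_kernel_def)
  have y: "xs (Suc n) \<in> X" and p: "\<forall>j<n. xs (Suc j) \<in> X" using xs by auto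
  have ky: "k (xs (Suc n)) (xs (Suc j)) = k (xs (Suc j)) (xs (Suc n))" if "j < n" for j
    using sym y p that by auto
  let ?A = "regularized_Kmat k xs c n"
  obtain z where z: "\<forall>i<n. (\<Sum>l<n. ?A $$ (i,l) * z l) = c * k (xs (Suc i)) (xs (Suc n))"
    using nonsingular_system_solvable[OF regularized_Kmat_carrier det,
        of "\<lambda>i. c * k (xs (Suc i)) (xs (Suc n))"] by blast
  have z': "\<forall>i<n. z i + c * (\<Sum>l<n. k (xs (Suc i)) (xs (Suc l)) * z l) = c * k (xs (Suc i)) (xs (Suc n))"
  proof (intro allI impI)
    fix i assume "i < n"
    have "(\<Sum>l<n. ?A $$ (i,l) * z l)
        = (\<Sum>l<n. (if i = l then z l else 0) + c * (k (xs (Suc i)) (xs (Suc l)) * z l))"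
      using \<open>i < n\<close> by (intro sum.cong refl) (simp add: regularized_Kmat_index algebra_simps)
    with z \<open>i < n\<close> show "z i + c * (\<Sum>l<n. k (xs (Suc i)) (xs (Suc l)) * z l) = c * k (xs (Suc i)) (xs (Suc n))"
      by (simp add: sum.distrib sum_distrib_left)
  qed
  define s where "s = 1 + c * k (xs (Suc n)) (xs (Suc n)) - c * (\<Sum>i<n. z i * k (xs (Suc i)) (xs (Suc n)))"
  have "(\<Sum>l<n. k (xs (Suc n)) (xs (Suc l)) * z l) = (\<Sum>i<n. z i * k (xs (Suc i)) (xs (Suc n)))"
    using ky by (intro sum.cong refl) simp
  then have "det (regularized_Kmat k xs c (Suc n)) = det ?A * s"
    using det_regularized_Kmat_Suc_eq[OF z] by (simp add: s_def)
  moreover have "1 \<le> s" and "s \<le> 1 + c * k (xs (Suc n)) (xs (Suc n))"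
    using Schur_correction_bounds(1,2)[OF pd y p \<open>c > 0\<close> z'] \<open>c > 0\<close> by (simp_all add: s_def)
  moreover have "1 + c * post_var k xs n (xs (Suc n)) \<le> s" if inv: "invertible_mat (Kmat k xs n)"
  proof -
    have "\<forall>l<n. (\<Sum>j<n. post_weight k xs n (xs (Suc n)) j * k (xs (Suc j)) (xs (Suc l)))
        = k (xs (Suc l)) (xs (Suc n))"
      using sum_post_weight_Kmat[OF inv] ky by simp
    from Schur_correction_bounds(3)[OF pd y p \<open>c > 0\<close> z' this]
    have "(\<Sum>i<n. z i * k (xs (Suc i)) (xs (Suc n)))
        \<le> (\<Sum>j<n. post_weight k xs n (xs (Suc n)) j * k (xs (Suc n)) (xs (Suc j)))"
      using ky by simp
    with \<open>c > 0\<close> show ?thesis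
      by (simp add: s_def post_var_eq_sum_post_weight right_diff_distrib)
  qed
  ultimately show ?thesis by (rule that)
qed

section \<open>Information gain and regret\<close>

lemma det_regularized_Kmat_ge_1:
  assumes pd: "pd_kernel k X" and "c > 0"
  shows "\<forall>i\<in>{1..n}. xs i \<in> X \<Longrightarrow> 1 \<le> det (regularized_Kmat k xs c n)"
proof (induction n)
  case (Suc n)
  then have IH: "1 \<le> det (regularized_Kmat k xs c n)" by simp
  obtain s where "det (regularized_Kmat k xs c (Suc n)) = det (regularized_Kmat k xs c n) * s" "1 \<le> s"
    using det_regularized_Kmat_Suc[OF pd Suc.prems \<open>c > 0\<close>] IH by force
  moreover from IH \<open>1 \<le> s\<close> have "1 * 1 \<le> det (regularized_Kmat k xs c n) * s"
    by (intro mult_mono) auto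
  ultimately show ?case by simp
qed (simp add: det_regularized_Kmat_0)

lemma det_regularized_Kmat_le:
  assumes pd: "pd_kernel k X" and "c > 0" and diag: "\<forall>y\<in>X. k y y \<le> 1"
  shows "\<forall>i\<in>{1..n}. xs i \<in> X \<Longrightarrow> det (regularized_Kmat k xs c n) \<le> (1 + c) ^ n"
proof (induction n)
  case (Suc n)
  then have IH: "det (regularized_Kmat k xs c n) \<le> (1 + c) ^ n" by simp
  have ge_1: "1 \<le> det (regularized_Kmat k xs c n)"
    using det_regularized_Kmat_ge_1[OF pd \<open>c > 0\<close>] Suc.prems by simp
  obtain s where s: "det (regularized_Kmat k xs c (Suc n)) = det (regularized_Kmat k xs c n) * s"
    "1 \<le> s" "s \<le> 1 + c * k (xs (Suc n)) (xs (Suc n))"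
    using det_regularized_Kmat_Suc[OF pd Suc.prems \<open>c > 0\<close>] ge_1 by auto
  have "c * k (xs (Suc n)) (xs (Suc n)) \<le> c * 1"
    using diag Suc.prems \<open>c > 0\<close> by (intro mult_left_mono) auto
  with s(3) have "s \<le> 1 + c" by simp
  with IH s(2) ge_1 have "det (regularized_Kmat k xs c n) * s \<le> (1 + c) ^ n * (1 + c)"
    by (intro mult_mono) auto
  with s(1) show ?case by (simp add: mult.commute)
qed (simp add: det_regularized_Kmat_0)

lemma prod_post_var_le_det_regularized_Kmat:
  assumes pd: "pd_kernel k X" and "c > 0"
  shows "\<forall>i\<in>{1..n}. xs i \<in> X \<Longrightarrow> \<forall>t<n. invertible_mat (Kmat k xs t) \<Longrightarrow>
    (\<Prod>t\<in>{1..n}. 1 + c * post_var k xs (t - 1) (xs t)) \<le> det (regularized_Kmat k xs c n)"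
proof (induction n)
  case (Suc n)
  let ?P = "\<lambda>n. \<Prod>t\<in>{1..n}. 1 + c * post_var k xs (t - 1) (xs t)"
  have IH: "?P n \<le> det (regularized_Kmat k xs c n)" using Suc by simp
  have ge_1: "1 \<le> det (regularized_Kmat k xs c n)"
    using det_regularized_Kmat_ge_1[OF pd \<open>c > 0\<close>] Suc.prems by simp
  have post_var: "0 \<le> post_var k xs (t - 1) (xs t)" if "t \<in> {1..Suc n}" for t
    by (rule post_var_nonneg[OF pd]) (use Suc.prems that in auto)
  obtain s where s: "det (regularized_Kmat k xs c (Suc n)) = det (regularized_Kmat k xs c n) * s"
    "1 + c * post_var k xs n (xs (Suc n)) \<le> s"
    using det_regularized_Kmat_Suc[OF pd Suc.prems(1) \<open>c > 0\<close>] ge_1 Suc.prems(2) by auto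
  have "?P (Suc n) = ?P n * (1 + c * post_var k xs n (xs (Suc n)))" by simp
  also have "\<dots> \<le> det (regularized_Kmat k xs c n) * s"
    using IH s(2) post_var[of "Suc n"] ge_1 \<open>c > 0\<close>
    by (intro mult_mono) auto
  finally show ?case using s(1) by simp
qed (simp add: det_regularized_Kmat_0)

lemma ln_det_regularized_Kmat_le_max_info_gain:
  assumes pd: "pd_kernel k X" and "\<sigma> > 0" and diag: "\<forall>y\<in>X. k y y \<le> 1"
    and xs: "\<forall>i\<in>{1..T}. xs i \<in> X"
  shows "1/2 * ln (det (regularized_Kmat k xs (1 / \<sigma>\<^sup>2) T)) \<le> max_info_gain k X \<sigma> T"
proof -
  let ?c = "1 / \<sigma>\<^sup>2"
  have "?c > 0" using \<open>\<sigma> > 0\<close> by simp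
  let ?F = "\<lambda>xs'. 1/2 * ln (det (1\<^sub>m T + ?c \<cdot>\<^sub>m Kmat k xs' T))"
  have bound: "?F xs' \<le> 1/2 * (T * ln (1 + ?c))" if "\<forall>i\<in>{1..T}. xs' i \<in> X" for xs'
  proof -
    have "ln (det (regularized_Kmat k xs' ?c T)) \<le> ln ((1 + ?c) ^ T)"
      using det_regularized_Kmat_ge_1[OF pd \<open>?c > 0\<close> that]
        det_regularized_Kmat_le[OF pd \<open>?c > 0\<close> diag that] by simp
    then show ?thesis using \<open>?c > 0\<close> by (simp add: regularized_Kmat_def ln_realpow)
  qed
  have "bdd_above (?F ` {xs'. \<forall>i\<in>{1..T}. xs' i \<in> X})"
    by (rule bdd_aboveI2[where M="1/2 * (T * ln (1 + ?c))"]) (use bound in blast)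
  then show ?thesis
    unfolding max_info_gain_def regularized_Kmat_def by (rule cSUP_upper[rotated]) (use xs in simp)
qed

lemma mult_ln_one_plus_le:
  fixes v c :: real
  assumes "0 \<le> v" "v \<le> 1" "c > 0"
  shows "v * ln (1 + c) \<le> ln (1 + c * v)"
proof -
  have "(1 - v) * ln 1 + v * ln (1 + c) \<le> ln ((1 - v) *\<^sub>R 1 + v *\<^sub>R (1 + c))"
    by (rule concave_onD[OF ln_concave]) (use assms in auto)
  also have "(1 - v) *\<^sub>R 1 + v *\<^sub>R (1 + c) = 1 + c * v" by (simp add: algebra_simps)
  finally show ?thesis by simp
qed

text \<open>For v in [0,1] concavity of ln gives ln (1 + c v) \<ge> v ln (1 + c); summing over the
  queried points, the product of the factors 1 + c v is at most det (I + c K_T) by the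
  Schur complement expansion.\<close>

lemma sum_post_var_le_max_info_gain:
  assumes pd: "pd_kernel k X" and "\<sigma> > 0" and diag: "\<forall>y\<in>X. k y y \<le> 1"
    and xs: "\<forall>i\<in>{1..T}. xs i \<in> X" and inv: "\<forall>t<T. invertible_mat (Kmat k xs t)"
  shows "(\<Sum>t\<in>{1..T}. post_var k xs (t - 1) (xs t)) \<le> 2 * max_info_gain k X \<sigma> T / ln (1 + 1 / \<sigma>\<^sup>2)"
proof -
  define c where "c = 1 / \<sigma>\<^sup>2"
  have "c > 0" using \<open>\<sigma> > 0\<close> by (simp add: c_def)
  define v where "v t = post_var k xs (t - 1) (xs t)" for t
  have v: "0 \<le> v t" "v t \<le> 1" if "t \<in> {1..T}" for t
  proof -
    have x: "xs t \<in> X" and p: "\<forall>j<t - 1. xs (Suc j) \<in> X"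
      and "invertible_mat (Kmat k xs (t - 1))"
      using xs inv that by auto
    then show "0 \<le> v t" unfolding v_def by (rule post_var_nonneg[OF pd])
    have "v t \<le> k (xs t) (xs t)"
      unfolding v_def by (rule post_var_le_kernel_diag[OF pd x p]) fact
    with diag x show "v t \<le> 1" by force
  qed
  have pos: "0 < 1 + c * v t" if "t \<in> {1..T}" for t
    using v[OF that] \<open>c > 0\<close> by (simp add: add_pos_nonneg)
  have "(\<Sum>t\<in>{1..T}. v t) * ln (1 + c) \<le> (\<Sum>t\<in>{1..T}. ln (1 + c * v t))"
    unfolding sum_distrib_right using v \<open>c > 0\<close> by (intro sum_mono mult_ln_one_plus_le) auto
  also have "\<dots> = ln (\<Prod>t\<in>{1..T}. 1 + c * v t)"
    by (rule ln_prod[symmetric]) (use pos in fastforce)+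
  also have "\<dots> \<le> ln (det (regularized_Kmat k xs c T))"
  proof (rule ln_mono)
    show "0 < (\<Prod>t\<in>{1..T}. 1 + c * v t)" using pos by (rule prod_pos)
    show "(\<Prod>t\<in>{1..T}. 1 + c * v t) \<le> det (regularized_Kmat k xs c T)"
      using prod_post_var_le_det_regularized_Kmat[OF pd \<open>c > 0\<close> xs inv] by (simp add: v_def)
  qed
  also have "\<dots> \<le> 2 * max_info_gain k X \<sigma> T"
    using ln_det_regularized_Kmat_le_max_info_gain[OF pd \<open>\<sigma> > 0\<close> diag xs] by (simp add: c_def)
  finally have "(\<Sum>t\<in>{1..T}. v t) * ln (1 + c) \<le> 2 * max_info_gain k X \<sigma> T" .
  moreover have "0 < ln (1 + c)" using \<open>c > 0\<close> by simp
  ultimately show ?thesis by (simp add: v_def c_def pos_le_divide_eq)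
qed

text \<open>One step of the UCB rule: the confidence band of width rkhs_norm f * sigma_t around m_t
  contains f, and x was chosen to maximize its upper end.\<close>

lemma ucb_instant_regret_le:
  assumes pd: "pd_kernel k X" and f: "in_rkhs k X f" and "xstar \<in> X" and "x \<in> X"
    and xs: "\<forall>j<t. xs (Suc j) \<in> X" and inv: "invertible_mat (Kmat k xs t)"
    and ucb: "post_mean k f xs t xstar + rkhs_norm k X f * sqrt (post_var k xs t xstar)
           \<le> post_mean k f xs t x + rkhs_norm k X f * sqrt (post_var k xs t x)"
  shows "f xstar - f x \<le> 2 * rkhs_norm k X f * sqrt (post_var k xs t x)"
  using rkhs_post_mean_error_le[OF pd f \<open>xstar \<in> X\<close> xs inv]
    rkhs_post_mean_error_le[OF pd f \<open>x \<in> X\<close> xs inv] ucb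
  by (simp add: abs_le_iff)

lemma sum_sqrt_le_sqrt_card_mult_sum:
  fixes v :: "'a \<Rightarrow> real"
  assumes "finite A" and "\<forall>a\<in>A. 0 \<le> v a"
  shows "(\<Sum>a\<in>A. sqrt (v a)) \<le> sqrt (card A * (\<Sum>a\<in>A. v a))"
proof (rule real_le_rsqrt)
  have "(\<Sum>a\<in>A. sqrt (v a))\<^sup>2 \<le> (\<Sum>a\<in>A. (sqrt (v a))\<^sup>2) * card A"
    by (rule sum_squared_le_sum_of_squares)
  also have "\<dots> = card A * (\<Sum>a\<in>A. v a)"
    using assms(2) by (simp add: mult.commute)
  finally show "(\<Sum>a\<in>A. sqrt (v a))\<^sup>2 \<le> card A * (\<Sum>a\<in>A. v a)" .
qed

lemma simple_regret_le_cumulative_regret: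
  assumes "T \<ge> 1"
  shows "simple_regret f xstar xs T \<le> cumulative_regret f xstar xs T / T"
proof -
  define best where "best = Max ((\<lambda>t. f (xs t)) ` {1..T})"
  have "(\<Sum>t\<in>{1..T}. f xstar - best) \<le> cumulative_regret f xstar xs T"
    unfolding cumulative_regret_def best_def by (intro sum_mono) auto
  with assms show ?thesis
    by (simp add: simple_regret_def best_def pos_le_divide_eq mult.commute)
qed

lemma sqrt_mult_divide_self:
  assumes "0 < x"
  shows "sqrt (x * a) / x = sqrt (a / x)"
proof -
  have "sqrt (x * a) / x = sqrt (x * a) / sqrt (x * x)" using assms by simp
  also have "\<dots> = sqrt (a / x)"
    using assms by (subst real_sqrt_divide[symmetric]) (simp add: mult_divide_mult_cancel_left_if)
  finally show ?thesis .
qed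

theorem theorem1:
  fixes X :: "(real ^ 'd) set" and k :: "real ^ 'd \<Rightarrow> real ^ 'd \<Rightarrow> real"
    and f :: "real ^ 'd \<Rightarrow> real" and xs :: "nat \<Rightarrow> real ^ 'd" and xstar :: "real ^ 'd"
    and T :: nat and \<sigma> C1 :: real
  assumes "compact X"
    and "pd_kernel k X"
    and "\<forall>y\<in>X. k y y \<le> 1"
    and "in_rkhs k X f"
    and "\<forall>t\<in>{1..T}. invertible_mat (Kmat k xs t)"
    and "\<forall>t\<in>{1..T}. xs t \<in> X \<and>
           (\<forall>y\<in>X. post_mean k f xs (t - 1) y + rkhs_norm k X f * sqrt (post_var k xs (t - 1) y)
                  \<le> post_mean k f xs (t - 1) (xs t) + rkhs_norm k X f * sqrt (post_var k xs (t - 1) (xs t)))"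
    and "xstar \<in> X" and "\<forall>y\<in>X. f y \<le> f xstar"
    and "T \<ge> 1"
    and "\<sigma> > 0"
    and "C1 = 8 / ln (1 + 1 / \<sigma>\<^sup>2)"
  shows "cumulative_regret f xstar xs T \<le> rkhs_norm k X f * sqrt (real T * C1 * max_info_gain k X \<sigma> T)
       \<and> simple_regret f xstar xs T \<le> rkhs_norm k X f * sqrt (C1 * max_info_gain k X \<sigma> T / real T)"
proof -
  note pd = assms(2) and f = assms(4)
  let ?B = "rkhs_norm k X f" and ?\<gamma> = "max_info_gain k X \<sigma> T"
  let ?v = "\<lambda>t. post_var k xs (t - 1) (xs t)"
  have xs: "\<forall>t\<in>{1..T}. xs t \<in> X" using assms(6) by blast
  have inv: "\<forall>t<T. invertible_mat (Kmat k xs t)"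
  proof (intro allI impI)
    fix t assume "t < T"
    with assms(5) show "invertible_mat (Kmat k xs t)"
      by (cases t) (simp_all add: invertible_mat_Kmat_0)
  qed
  have v: "\<forall>t\<in>{1..T}. 0 \<le> ?v t" using xs inv by (auto intro!: post_var_nonneg[OF pd])
  have "cumulative_regret f xstar xs T \<le> (\<Sum>t\<in>{1..T}. 2 * ?B * sqrt (?v t))"
    unfolding cumulative_regret_def
    using xs inv assms(6,7) by (intro sum_mono ucb_instant_regret_le[OF pd f]) auto
  also have "\<dots> \<le> 2 * ?B * sqrt (T * (\<Sum>t\<in>{1..T}. ?v t))"
    unfolding sum_distrib_left[symmetric]
    using sum_sqrt_le_sqrt_card_mult_sum[OF _ v] rkhs_norm_nonneg[OF pd f]
    by (intro mult_left_mono) auto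
  also have "\<dots> \<le> 2 * ?B * sqrt (T * (C1 * ?\<gamma> / 4))"
    using sum_post_var_le_max_info_gain[OF pd assms(10,3) xs inv] assms(11) rkhs_norm_nonneg[OF pd f]
    by (intro mult_left_mono real_sqrt_le_mono) auto
  also have "\<dots> = ?B * sqrt (T * C1 * ?\<gamma>)"
    by (simp add: real_sqrt_divide mult.assoc)
  finally have R: "cumulative_regret f xstar xs T \<le> ?B * sqrt (T * C1 * ?\<gamma>)" .
  have "simple_regret f xstar xs T \<le> cumulative_regret f xstar xs T / T"
    by (rule simple_regret_le_cumulative_regret[OF assms(9)])
  also have "\<dots> \<le> ?B * sqrt (T * C1 * ?\<gamma>) / T"
    using R by (simp add: divide_right_mono)
  also have "\<dots> = ?B * (sqrt (T * (C1 * ?\<gamma>)) / T)" by (simp add: mult.assoc)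
  also have "\<dots> = ?B * sqrt (C1 * ?\<gamma> / T)"
    using assms(9) by (subst sqrt_mult_divide_self) auto
  finally show ?thesis using R by simp
qed

end
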